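(* Let $q$ be an odd prime power, $d$ an odd positive integer, and $A\subset\mathbb F_q^d$. Let $\mathcal{SQ}(A)$ and $\mathcal{ZR}(A)$ be the number of pairs $(x,y)\in A\times A$ with $\eta(\|x-y\|)=1$ and with $\eta(\|x-y\|)=0$, respectively, and let $\Omega^0(A)=\sum_{m\in\mathbb F_q^d:\ \|m\|=0}|\widehat{A}(m)|^2$. \begin{enumerate} \item If $d\equiv 3\pmod 4$ and $q\equiv 3\pmod 4$, then $$\mathcal{SQ}(A)+\frac{\mathcal{ZR}(A)}{2}=\frac{|A|^2}{2}-\frac{q^{\frac{3d+1}{2}}}{2}\Omega^0(A)+\frac{q^{\frac{d-1}{2}}|A|}{2}.$$ \item If $d\equiv 1\pmod 4$, or $d\equiv 3\pmod 4$ and $q\equiv 1\pmod 4$, then $$\mathcal{SQ}(A)+\frac{\mathcal{ZR}(A)}{2}=\frac{|A|^2}{2}+\frac{q^{\frac{3d+1}{2}}}{2}\Omega^0(A)-\frac{q^{\frac{d-1}{2}}|A|}{2}.$$ \end{enumerate}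
   Context: For $x\in\mathbb F_q^d$, $\|x\|=x_1^2+\cdots+x_d^2$. $\eta$ is the quadratic character of $\mathbb F_q$ with $\eta(0)=0$. $\chi$ is the canonical nontrivial additive character of $\mathbb F_q$, and for $A\subset\mathbb F_q^d$, $\widehat{A}(m)=q^{-d}\sum_{x\in A}\chi(-m\cdot x)$ is the Fourier transform of the indicator function of $A$. *)

theory Defs
  imports "HOL-Analysis.Analysis"
begin

text \<open>Finite field F_q is modelled by a type 'a of class {finite, field};
  F_q^d is 'a^'n with d = CARD('n).\<close>

definition sqnorm :: "'a::field^'n \<Rightarrow> 'a" where
  "sqnorm x = (\<Sum>i\<in>UNIV. (x$i)^2)"

definition dotp :: "'a::field^'n \<Rightarrow> 'a^'n \<Rightarrow> 'a" where
  "dotp m x = (\<Sum>i\<in>UNIV. m$i * x$i)"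

definition qchar :: "'a::{finite,field} \<Rightarrow> int" where
  "qchar a = (if a = 0 then 0 else if (\<exists>b. a = b^2) then 1 else -1)"

definition field_deg :: "'a::{finite,field} itself \<Rightarrow> nat" where
  "field_deg _ = (THE n. CARD('a) = CHAR('a) ^ n)"

definition ftrace :: "'a::{finite,field} \<Rightarrow> 'a" where
  "ftrace x = (\<Sum>i<field_deg TYPE('a). x ^ (CHAR('a) ^ i))"

definition ftrace_nat :: "'a::{finite,field} \<Rightarrow> nat" where
  "ftrace_nat x = (THE k. k < CHAR('a) \<and> of_nat k = ftrace x)"

definition addchar :: "'a::{finite,field} \<Rightarrow> complex" where
  "addchar x = cis (2 * pi * real (ftrace_nat x) / real CHAR('a))"

definition fourier :: "('a::{finite,field}^'n) set \<Rightarrow> 'a^'n \<Rightarrow> complex" where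
  "fourier A m = (\<Sum>x\<in>A. addchar (- dotp m x)) / of_nat CARD('a) ^ CARD('n)"

definition SQ :: "('a::{finite,field}^'n) set \<Rightarrow> nat" where
  "SQ A = card {(x,y). x \<in> A \<and> y \<in> A \<and> qchar (sqnorm (x - y)) = 1}"

definition ZR :: "('a::{finite,field}^'n) set \<Rightarrow> nat" where
  "ZR A = card {(x,y). x \<in> A \<and> y \<in> A \<and> qchar (sqnorm (x - y)) = 0}"

definition Omega0 :: "('a::{finite,field}^'n) set \<Rightarrow> real" where
  "Omega0 A = (\<Sum>m\<in>{m. sqnorm m = 0}. (cmod (fourier A m))^2)"

end

theory Submission
  imports Defs
    "HOL-Computational_Algebra.Polynomial"
    "HOL-Computational_Algebra.Primes"
    "HOL-Number_Theory.Cong"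
    "HOL-Library.Real_Mod"
begin

text \<open>
  Counting pairs by the value of \<open>\<eta>\<close> gives
  \<open>SQ A + ZR A / 2 = (|A|\<^sup>2 + T) / 2\<close> with \<open>T = \<Sum>\<^bsub>x,y\<in>A\<^esub> \<eta>(\<parallel>x - y\<parallel>)\<close>.
  With the Gauss sum \<open>G = \<Sum>\<^sub>a \<eta>(a) \<chi>(a)\<close> one has \<open>\<eta>(a) G = \<Sum>\<^sub>s \<eta>(s) \<chi>(a s)\<close>,
  which turns \<open>G T\<close> into a combination of the sums \<open>\<Sum>\<^bsub>x,y\<in>A\<^esub> \<chi>(s \<parallel>x - y\<parallel>)\<close>.
  For \<open>s \<noteq> 0\<close>, completing the square in each coordinate shows that \<open>w \<mapsto> \<chi>(s \<parallel>w\<parallel>)\<close>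
  has Fourier coefficients \<open>(\<eta>(s) G)\<^sup>d \<chi>(-\<parallel>m\<parallel> / 4s)\<close>, so each of these sums is a weighted
  sum of the \<open>|fourier A m|\<^sup>2\<close>. As \<open>d\<close> is odd, \<open>\<eta>(s)\<^sup>d\<^sup>+\<^sup>1 = 1\<close> for \<open>s \<noteq> 0\<close>, and the sum over
  \<open>s\<close> of the weights is \<open>q - 1\<close> if \<open>\<parallel>m\<parallel> = 0\<close> and \<open>-1\<close> otherwise. Parseval then gives
  \<open>T = G\<^sup>d\<^sup>-\<^sup>1 (q\<^sup>d\<^sup>+\<^sup>1 \<Omega>\<^sup>0(A) - |A|)\<close>, and \<open>G\<^sup>2 = \<eta>(-1) q\<close> with
  \<open>\<eta>(-1)\<^sup>(\<^sup>d\<^sup>-\<^sup>1\<^sup>)\<^sup>/\<^sup>2 = -1\<close> exactly when \<open>d \<equiv> q \<equiv> 3 (mod 4)\<close>.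
\<close>

section \<open>Finite fields\<close>

lemma prime_CHAR_finite_field: "prime CHAR('a::{finite,field})"
  by (rule prime_CHAR_semidom) (simp add: finite_imp_CHAR_pos)

lemma CHAR_gt_1: "CHAR('a::{finite,field}) > 1"
  using prime_CHAR_finite_field prime_gt_1_nat by blast

lemma power_card_minus_one_eq_1:
  assumes "(x::'a::{finite,field}) \<noteq> 0"
  shows "x ^ (CARD('a) - 1) = 1"
proof -
  have "(\<Prod>y\<in>-{0}. x * y) = (\<Prod>y\<in>-{0::'a}. y)"
    by (rule prod.reindex_bij_witness[of _ "\<lambda>y. y / x" "\<lambda>y. x * y"]) (use assms in auto)
  moreover have "card (-{0::'a}) = CARD('a) - 1"
    by (simp add: Compl_eq_Diff_UNIV card_Diff_singleton)
  moreover have "(\<Prod>y\<in>-{0::'a}. y) \<noteq> 0"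
    by simp
  ultimately show ?thesis
    by (simp add: prod.distrib)
qed

lemma power_card_eq_self: "(x::'a::{finite,field}) ^ CARD('a) = x"
proof (cases "x = 0")
  case False
  have "CARD('a) = Suc (CARD('a) - 1)"
    by simp
  then show ?thesis
    by (metis False power_Suc power_card_minus_one_eq_1 mult_1_right)
qed simp

lemma of_nat_eq_of_nat_iff_less_CHAR:
  assumes "m < CHAR('a::semiring_1_cancel)" "n < CHAR('a)"
  shows "(of_nat m :: 'a) = of_nat n \<longleftrightarrow> m = n"
  using assms by (auto simp: of_nat_eq_iff_cong_CHAR cong_less_modulus_unique_nat)

lemma of_nat_mult_mem_additive_submonoid:
  assumes "0 \<in> V" "\<And>x y. x \<in> V \<Longrightarrow> y \<in> V \<Longrightarrow> x + y \<in> V" "x \<in> V"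
  shows "of_nat c * x \<in> V"
  by (induction c) (simp_all add: assms algebra_simps)

lemma mem_additive_submonoid_of_nat_mult:
  fixes V :: "'a::{finite,field} set"
  assumes "0 \<in> V" "\<And>x y. x \<in> V \<Longrightarrow> y \<in> V \<Longrightarrow> x + y \<in> V"
    and "of_nat k * a \<in> V" "\<not> CHAR('a) dvd k"
  shows "a \<in> V"
proof -
  have "coprime k CHAR('a)"
    using assms(4) prime_CHAR_finite_field[where 'a='a] by (metis prime_imp_coprime coprime_commute)
  then obtain j where "[k * j = 1] (mod CHAR('a))"
    using cong_solve_coprime_nat by auto
  then have "of_nat j * of_nat k = (1 :: 'a)"
    by (metis mult.commute of_nat_1 of_nat_eq_iff_cong_CHAR of_nat_mult)
  then have "of_nat j * (of_nat k * a) = a"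
    by (simp flip: mult.assoc)
  then show "a \<in> V"
    using of_nat_mult_mem_additive_submonoid[OF assms(1,2,3), of j] by (simp only:)
qed

text \<open>The translates \<open>V + c a\<close>, \<open>c < p\<close>, are pairwise disjoint: a common element would give
  \<open>(c - c') a \<in> V\<close> with \<open>c - c'\<close> a unit modulo \<open>p\<close>.\<close>

lemma additive_submonoid_extend:
  fixes V :: "'a::{finite,field} set"
  assumes zero: "0 \<in> V" and add: "\<And>x y. x \<in> V \<Longrightarrow> y \<in> V \<Longrightarrow> x + y \<in> V" and "a \<notin> V"
  obtains W :: "'a set" where "0 \<in> W" "\<And>x y. x \<in> W \<Longrightarrow> y \<in> W \<Longrightarrow> x + y \<in> W"
    "card W = CHAR('a) * card V"
proof -
  let ?p = "CHAR('a)"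
  define f where "f = (\<lambda>(v, c). v + of_nat c * a :: 'a)"
  define W where "W = f ` (V \<times> {..<?p})"
  have mem: "v + of_nat c * a \<in> W" if "v \<in> V" for v c
  proof -
    have "v + of_nat c * a = f (v, c mod ?p)"
      by (simp add: f_def of_nat_eq_iff_cong_CHAR)
    then show ?thesis
      using that CHAR_gt_1[where 'a='a] by (auto simp: W_def)
  qed
  have W0: "0 \<in> W"
    using mem[OF zero, of 0] by simp
  have W_add: "x + y \<in> W" if xy: "x \<in> W" "y \<in> W" for x y
  proof -
    obtain v c v' c' where "v \<in> V" "v' \<in> V" "x = v + of_nat c * a" "y = v' + of_nat c' * a"
      using xy by (auto simp: W_def f_def)
    then show ?thesis
      using mem[OF add[OF \<open>v \<in> V\<close> \<open>v' \<in> V\<close>], of "c + c'"] by (simp add: algebra_simps)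
  qed
  have "inj_on f (V \<times> {..<?p})"
  proof (rule inj_onI, clarify)
    fix v c v' c'
    assume v: "v \<in> V" "v' \<in> V" and c: "c < ?p" "c' < ?p" and eq: "f (v, c) = f (v', c')"
    have "of_nat (c + (?p - c')) * a = v' + of_nat (?p - 1) * v"
      using eq c by (simp add: f_def algebra_simps)
    then have "of_nat (c + (?p - c')) * a \<in> V"
      using v by (simp add: add of_nat_mult_mem_additive_submonoid[OF zero add])
    then have "?p dvd c + (?p - c')"
      using mem_additive_submonoid_of_nat_mult[OF zero add] \<open>a \<notin> V\<close> by blast
    then obtain t where "c + (?p - c') = ?p * t"
      by blast
    then have "c = c'"
      using c by (cases t; cases "t - 1") (auto simp: algebra_simps)
    then show "v = v' \<and> c = c'"
      using eq by (simp add: f_def)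
  qed
  then have W_card: "card W = ?p * card V"
    by (simp add: W_def card_image card_cartesian_product)
  show ?thesis
    by (rule that[of W]) (fact W0 W_add W_card)+
qed

lemma CARD_eq_CHAR_power: "\<exists>n. CARD('a::{finite,field}) = CHAR('a) ^ n"
proof -
  have "\<exists>n. CARD('a) = CHAR('a) ^ n"
    if "0 \<in> V" "\<And>x y. x \<in> V \<Longrightarrow> y \<in> V \<Longrightarrow> x + y \<in> V" "card V = CHAR('a) ^ k"
    for V :: "'a set" and k
    using that
  proof (induction "CARD('a) - card V" arbitrary: V k rule: less_induct)
    case less
    show ?case
    proof (cases "V = UNIV")
      case True
      then show ?thesis
        using less.prems(3) by auto
    next
      case False
      then obtain a where "a \<notin> V"
        by blast
      then obtain W :: "'a set" where W: "0 \<in> W" "\<And>x y. x \<in> W \<Longrightarrow> y \<in> W \<Longrightarrow> x + y \<in> W"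
        "card W = CHAR('a) * card V"
        using additive_submonoid_extend[OF less.prems(1,2)] by blast
      have "card V < card W"
        using W(3) less.prems(3) CHAR_gt_1[where 'a='a] by simp
      moreover have "card W \<le> CARD('a)"
        by (rule card_mono) auto
      ultimately have "CARD('a) - card W < CARD('a) - card V"
        by linarith
      then show ?thesis
        using less.hyps[OF _ W(1,2), of "Suc k"] W(3) less.prems(3) by simp
    qed
  qed
  from this[of "{0}" 0] show ?thesis
    by simp
qed

lemma CARD_eq_CHAR_power_field_deg: "CARD('a::{finite,field}) = CHAR('a) ^ field_deg TYPE('a)"
proof -
  have "\<exists>!n. CARD('a) = CHAR('a) ^ n"
    using CARD_eq_CHAR_power[where 'a='a] CHAR_gt_1[where 'a='a] by auto
  then show ?thesis
    unfolding field_deg_def by (rule theI')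
qed

lemma two_le_CARD: "2 \<le> CARD('a::{finite,field})"
proof -
  have "card {0::'a, 1} \<le> CARD('a)"
    by (rule card_mono) auto
  then show ?thesis
    by simp
qed

lemma field_deg_pos: "field_deg TYPE('a::{finite,field}) > 0"
  using two_le_CARD[where 'a='a] CARD_eq_CHAR_power_field_deg[where 'a='a] by (intro gr0I) auto

section \<open>The trace and the canonical additive character\<close>

lemma ftrace_add: "ftrace ((x::'a::{finite,field}) + y) = ftrace x + ftrace y"
  unfolding ftrace_def sum.distrib[symmetric]
  by (intro sum.cong refl freshmans_dream'[OF prime_CHAR_finite_field refl])

lemma ftrace_power_CHAR: "ftrace (x::'a::{finite,field}) ^ CHAR('a) = ftrace x"
proof -
  let ?p = "CHAR('a)" and ?n = "field_deg TYPE('a)"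
  have "ftrace x ^ ?p = (\<Sum>i<?n. x ^ (?p ^ Suc i))"
    unfolding ftrace_def freshmans_dream_sum[OF prime_CHAR_finite_field refl]
    by (simp add: power_mult[symmetric] mult.commute)
  also have "\<dots> = (\<Sum>i<Suc ?n. x ^ (?p ^ i)) - x"
    unfolding sum.lessThan_Suc_shift by simp
  also have "\<dots> = ftrace x"
    by (simp add: ftrace_def power_card_eq_self flip: CARD_eq_CHAR_power_field_deg)
  finally show ?thesis .
qed

lemma of_nat_power_CHAR: "(of_nat k :: 'a::{finite,field}) ^ CHAR('a) = of_nat k"
proof (induction k)
  case (Suc k)
  then show ?case
    using freshmans_dream[OF prime_CHAR_finite_field refl, of "1::'a" "of_nat k"] by simp
qed (use CHAR_gt_1[where 'a='a] in simp)

text \<open>The elements fixed by the Frobenius map \<open>y \<mapsto> y\<^sup>p\<close> are the \<open>p\<close> roots of \<open>X\<^sup>p - X\<close>,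
  and the prime field already supplies \<open>p\<close> of them.\<close>

lemma power_CHAR_eq_self_imp_of_nat:
  assumes "(y::'a::{finite,field}) ^ CHAR('a) = y"
  shows "\<exists>k<CHAR('a). y = of_nat k"
proof -
  let ?p = "CHAR('a)"
  define R :: "'a poly" where "R = monom 1 ?p - [:0, 1:]"
  have p2: "?p \<ge> 2"
    using CHAR_gt_1[where 'a='a] by simp
  have poly_R: "poly R x = x ^ ?p - x" for x
    by (simp add: R_def poly_monom)
  have "coeff R ?p = 1"
    using p2 by (simp add: R_def coeff_pCons split: nat.splits)
  then have "R \<noteq> 0"
    by auto
  have "degree R \<le> ?p"
    unfolding R_def by (rule degree_diff_le) (use p2 in \<open>auto intro: degree_monom_le\<close>)
  then have roots: "card {x. poly R x = 0} \<le> ?p"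
    using card_poly_roots_bound[OF \<open>R \<noteq> 0\<close>] by simp
  have sub: "of_nat ` {..<?p} \<subseteq> {x. poly R x = 0}"
    by (auto simp: poly_R of_nat_power_CHAR)
  have "inj_on (of_nat :: nat \<Rightarrow> 'a) {..<?p}"
    by (auto intro!: inj_onI simp: of_nat_eq_of_nat_iff_less_CHAR)
  then have "card (of_nat ` {..<?p} :: 'a set) = ?p"
    by (simp add: card_image)
  then have "of_nat ` {..<?p} = {x. poly R x = 0}"
    using card_subset_eq[OF poly_roots_finite[OF \<open>R \<noteq> 0\<close>] sub] roots
      card_mono[OF poly_roots_finite[OF \<open>R \<noteq> 0\<close>] sub] by simp
  moreover have "poly R y = 0"
    using assms by (simp add: poly_R)
  ultimately show ?thesis
    by auto
qed

lemma ftrace_nat: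
  fixes x :: "'a::{finite,field}"
  shows ftrace_nat_less_CHAR: "ftrace_nat x < CHAR('a)"
    and of_nat_ftrace_nat: "of_nat (ftrace_nat x) = ftrace x"
proof -
  have "\<exists>!k. k < CHAR('a) \<and> of_nat k = ftrace x"
  proof (rule ex_ex1I)
    show "\<exists>k. k < CHAR('a) \<and> of_nat k = ftrace x"
      using power_CHAR_eq_self_imp_of_nat[OF ftrace_power_CHAR[of x]] by auto
  qed (metis of_nat_eq_of_nat_iff_less_CHAR)
  then have "ftrace_nat x < CHAR('a) \<and> of_nat (ftrace_nat x) = ftrace x"
    unfolding ftrace_nat_def by (rule theI')
  then show "ftrace_nat x < CHAR('a)" "of_nat (ftrace_nat x) = ftrace x"
    by simp_all
qed

lemma ftrace_nat_add:
  "ftrace_nat ((x::'a::{finite,field}) + y) = (ftrace_nat x + ftrace_nat y) mod CHAR('a)"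
proof -
  have "[ftrace_nat (x + y) = ftrace_nat x + ftrace_nat y] (mod CHAR('a))"
    by (simp flip: of_nat_eq_iff_cong_CHAR add: of_nat_ftrace_nat ftrace_add)
  then show ?thesis
    using ftrace_nat_less_CHAR[of "x + y"] by (simp add: cong_def)
qed

lemma ftrace_nonzero: "\<exists>x::'a::{finite,field}. ftrace x \<noteq> 0"
proof (rule ccontr)
  assume "\<not> ?thesis"
  then have all_roots: "ftrace x = 0" for x :: 'a
    by blast
  let ?p = "CHAR('a)" and ?n = "field_deg TYPE('a)"
  have p1: "?p > 1" and n0: "?n > 0"
    by (rule CHAR_gt_1 field_deg_pos)+
  define T :: "'a poly" where "T = (\<Sum>i<?n. monom 1 (?p ^ i))"
  have "coeff T (?p ^ (?n - 1)) = (\<Sum>i<?n. if i = ?n - 1 then 1 else 0)"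
    unfolding T_def coeff_sum using p1 by (intro sum.cong) auto
  also have "\<dots> = 1"
    using n0 by simp
  finally have "T \<noteq> 0"
    by auto
  have "degree T \<le> ?p ^ (?n - 1)"
    unfolding T_def
    by (rule degree_sum_le) (use p1 in \<open>auto intro!: order.trans[OF degree_monom_le] power_increasing\<close>)
  then have "card {x. poly T x = 0} \<le> ?p ^ (?n - 1)"
    using card_poly_roots_bound[OF \<open>T \<noteq> 0\<close>] by simp
  moreover have "{x. poly T x = 0} = UNIV"
    using all_roots by (auto simp: T_def poly_sum poly_monom ftrace_def)
  moreover have "?p ^ (?n - 1) < ?p ^ ?n"
    using p1 n0 by simp
  ultimately show False
    using CARD_eq_CHAR_power_field_deg[where 'a='a] by simp
qed

lemma power_mod_eq_power:
  assumes "(x::'a::monoid_mult) ^ n = 1"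
  shows "x ^ (k mod n) = x ^ k"
proof -
  have "x ^ k = x ^ (n * (k div n) + k mod n)"
    by simp
  also have "\<dots> = (x ^ n) ^ (k div n) * x ^ (k mod n)"
    by (simp only: power_add power_mult)
  finally show ?thesis
    using assms by simp
qed

lemma cis_2pi_div_power:
  assumes "n > 0"
  shows cis_2pi_div_power_self: "cis (2 * pi / real n) ^ n = 1"
    and cis_2pi_div_power_eq_1_iff: "cis (2 * pi / real n) ^ k = 1 \<longleftrightarrow> n dvd k"
proof -
  show "cis (2 * pi / real n) ^ n = 1"
    using assms by (simp add: Complex.DeMoivre)
  have angle: "real k * (2 * pi / real n) = of_int m * (2 * pi) \<longleftrightarrow> int k = m * int n" for m
  proof -
    have "real k * (2 * pi / real n) = of_int m * (2 * pi) \<longleftrightarrow> real k = of_int m * real n"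
      using assms by (auto simp: field_simps)
    also have "\<dots> \<longleftrightarrow> int k = m * int n"
      by (metis of_int_eq_iff of_int_mult of_int_of_nat_eq)
    finally show ?thesis .
  qed
  have "cis (2 * pi / real n) ^ k = 1 \<longleftrightarrow> (\<exists>m. int k = m * int n)"
    by (simp only: Complex.DeMoivre cis_eq_1_iff angle)
  also have "\<dots> \<longleftrightarrow> n dvd k"
    by (metis dvd_def int_dvd_int_iff mult.commute)
  finally show "cis (2 * pi / real n) ^ k = 1 \<longleftrightarrow> n dvd k" .
qed

lemma addchar_eq_power: "addchar x = cis (2 * pi / real CHAR('a)) ^ ftrace_nat (x::'a::{finite,field})"
  by (simp add: addchar_def Complex.DeMoivre mult_ac)

lemma addchar_add: "addchar ((x::'a::{finite,field}) + y) = addchar x * addchar y"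
  using cis_2pi_div_power_self[of "CHAR('a)"] CHAR_gt_1[where 'a='a]
  by (simp add: addchar_eq_power ftrace_nat_add power_mod_eq_power power_add)

lemma addchar_zero [simp]: "addchar (0::'a::{finite,field}) = 1"
  using addchar_add[of "0::'a" 0] by (simp add: addchar_def)

lemma norm_addchar [simp]: "norm (addchar (x::'a::{finite,field})) = 1"
  by (simp add: addchar_def)

lemma addchar_uminus: "addchar (- (x::'a::{finite,field})) = cnj (addchar x)"
proof -
  have "addchar (- x) * addchar x = 1"
    by (simp flip: addchar_add)
  then show ?thesis
    by (metis complex_norm_square inverse_unique mult.commute norm_addchar of_real_1 power_one)
qed

lemma addchar_diff: "addchar ((x::'a::{finite,field}) - y) = addchar x * cnj (addchar y)"
  using addchar_add[of x "- y"] by (simp add: addchar_uminus)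

lemma addchar_sum: "addchar (sum f I) = (\<Prod>i\<in>I. addchar (f i :: 'a::{finite,field}))"
  by (induction I rule: infinite_finite_induct) (simp_all add: addchar_add)

lemma addchar_nontrivial: "\<exists>x::'a::{finite,field}. addchar x \<noteq> 1"
proof -
  obtain x :: 'a where "ftrace x \<noteq> 0"
    using ftrace_nonzero by blast
  then have "0 < ftrace_nat x"
    by (metis gr0I of_nat_0 of_nat_ftrace_nat)
  then have "\<not> CHAR('a) dvd ftrace_nat x"
    using ftrace_nat_less_CHAR[of x] by (auto dest: dvd_imp_le)
  then have "addchar x \<noteq> 1"
    using CHAR_gt_1[where 'a='a] by (simp add: addchar_eq_power cis_2pi_div_power_eq_1_iff)
  then show ?thesis ..
qed

lemma sum_addchar_mult:
  "(\<Sum>a\<in>UNIV. addchar (s * (a::'a::{finite,field}))) = (if s = 0 then of_nat CARD('a) else 0)"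
proof (cases "s = 0")
  case False
  obtain c :: 'a where "addchar c \<noteq> 1"
    using addchar_nontrivial by blast
  then obtain b where b: "addchar (s * b) \<noteq> 1"
    using False by (metis mult.commute nonzero_divide_eq_eq)
  have "(\<Sum>a\<in>UNIV. addchar (s * a)) = (\<Sum>a\<in>UNIV. addchar (s * (a + b)))"
    by (rule sum.reindex_bij_witness[where i="\<lambda>a. a + b" and j="\<lambda>a. a - b"]) auto
  also have "\<dots> = addchar (s * b) * (\<Sum>a\<in>UNIV. addchar (s * a))"
    by (simp add: distrib_left addchar_add sum_distrib_left mult.commute)
  finally have "(1 - addchar (s * b)) * (\<Sum>a\<in>UNIV. addchar (s * a)) = 0"
    by (simp add: algebra_simps)
  moreover have "1 - addchar (s * b) \<noteq> 0"
    using b by simp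
  ultimately show ?thesis
    using False by simp
qed simp

section \<open>The quadratic character\<close>

lemma odd_CHAR:
  assumes "odd CARD('a::{finite,field})"
  shows "odd CHAR('a)"
proof -
  have "CHAR('a) dvd CARD('a)"
    using field_deg_pos[where 'a='a] by (subst CARD_eq_CHAR_power_field_deg) simp
  then show ?thesis
    using assms by (auto elim: dvd_trans[rotated])
qed

lemma two_neq_zero:
  assumes "odd CARD('a::{finite,field})"
  shows "(2::'a) \<noteq> 0"
proof
  assume "(2::'a) = 0"
  then have "CHAR('a) dvd 2"
    by (metis of_nat_eq_0_iff_char_dvd of_nat_numeral)
  then have "CHAR('a) \<le> 2"
    by (rule dvd_imp_le) simp
  then show False
    using odd_CHAR[OF assms] CHAR_gt_1[where 'a='a] by (cases "CHAR('a) = 2") auto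
qed

lemma four_neq_zero:
  assumes "odd CARD('a::{finite,field})"
  shows "(4::'a) \<noteq> 0"
  using two_neq_zero[OF assms] mult_eq_0_iff[of "2::'a" 2] by auto

lemma three_le_CARD:
  assumes "odd CARD('a::{finite,field})"
  shows "3 \<le> CARD('a)"
  using two_le_CARD[where 'a='a] assms by (cases "CARD('a) = 2") auto

lemma of_int_eq_iff_sign_values:
  assumes "(2::'a::ring_1) \<noteq> 0" "x \<in> {-1, 0, 1}" "y \<in> {-1, 0, 1}"
  shows "(of_int x :: 'a) = of_int y \<longleftrightarrow> x = y"
proof -
  have "(1::'a) \<noteq> - 1"
    using assms(1) by (metis eq_neg_iff_add_eq_0 one_add_one)
  then show ?thesis
    using assms(2,3) by auto
qed

lemma card_power_eq_le:
  assumes "n > 0"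
  shows "card {x::'a::idom. x ^ n = c} \<le> n"
proof -
  define R :: "'a poly" where "R = monom 1 n - [:c:]"
  have "coeff R n = 1"
    using assms by (cases n) (simp_all add: R_def)
  then have "R \<noteq> 0"
    by auto
  moreover have "degree R \<le> n"
    unfolding R_def by (rule degree_diff_le) (auto intro: degree_monom_le)
  moreover have "{x. x ^ n = c} = {x. poly R x = 0}"
    by (simp add: R_def poly_monom)
  ultimately show ?thesis
    using card_poly_roots_bound[of R] by simp
qed

text \<open>Squaring is at most two-to-one on the \<open>q - 1\<close> nonzero elements, so there are at least
  \<open>h = (q - 1) div 2\<close> nonzero squares; by Fermat they are all roots of \<open>X\<^sup>h - 1\<close>, which has
  at most \<open>h\<close> roots.\<close>

lemma nonzero_squares:
  assumes "odd CARD('a::{finite,field})"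
  defines "h \<equiv> (CARD('a) - 1) div 2"
  shows nonzero_squares_eq_roots: "(\<lambda>b. b^2) ` (-{0}) = {x::'a. x ^ h = 1}"
    and card_nonzero_squares: "card ((\<lambda>b. b^2) ` (-{0::'a})) = h"
proof -
  let ?S = "(\<lambda>b. b^2) ` (-{0::'a})"
  have h: "2 * h = CARD('a) - 1"
    using assms(1) unfolding h_def by simp
  have "h > 0"
    using three_le_CARD[OF assms(1)] by (simp add: h_def div_greater_zero_iff)
  have sub: "?S \<subseteq> {x. x ^ h = 1}"
    using power_card_minus_one_eq_1[where 'a='a] by (auto simp: power_mult[symmetric] h)
  have "(\<Union>c\<in>?S. {b. b^2 = c}) = -{0}"
    by auto
  then have "CARD('a) - 1 = card (\<Union>c\<in>?S. {b. b^2 = c})"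
    by (simp add: card_Diff_singleton Compl_eq_Diff_UNIV)
  also have "\<dots> \<le> (\<Sum>c\<in>?S. card {b::'a. b^2 = c})"
    by (rule card_UN_le) simp
  also have "\<dots> \<le> (\<Sum>c\<in>?S. 2)"
    by (intro sum_mono card_power_eq_le) simp
  finally have "h \<le> card ?S"
    using h by simp
  moreover have "card {x::'a. x ^ h = 1} \<le> h"
    using \<open>h > 0\<close> by (rule card_power_eq_le)
  moreover have "card ?S \<le> card {x::'a. x ^ h = 1}"
    by (rule card_mono[OF _ sub]) simp
  ultimately show "?S = {x. x ^ h = 1}" "card ?S = h"
    using card_subset_eq[OF _ sub] by simp_all
qed

lemma qchar_values: "qchar a \<in> {-1, 0, 1}"
  by (simp add: qchar_def)

lemma qchar_eq_0_iff [simp]: "qchar a = 0 \<longleftrightarrow> a = 0"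
  by (simp add: qchar_def)

lemma qchar_zero [simp]: "qchar 0 = 0"
  by (simp add: qchar_def)

lemma qchar_square [simp]: "b \<noteq> 0 \<Longrightarrow> qchar (b^2) = 1"
  by (auto simp: qchar_def)

lemma qchar_one [simp]: "qchar 1 = 1"
  using qchar_square[of 1] by simp

lemma qchar_power2: "a \<noteq> 0 \<Longrightarrow> qchar a ^ 2 = 1"
  by (auto simp: qchar_def)

lemma euler_criterion:
  assumes "odd CARD('a::{finite,field})"
  shows "(of_int (qchar a) :: 'a) = a ^ ((CARD('a) - 1) div 2)"
proof -
  obtain k where q: "CARD('a) = 2 * k + 1"
    using assms by (rule oddE)
  then have fermat: "b ^ (2 * k) = 1" if "b \<noteq> 0" for b :: 'a
    using power_card_minus_one_eq_1[OF that] by simp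
  consider "a = 0" | b where "a = b^2" "b \<noteq> 0" | "a \<noteq> 0" "\<nexists>b. a = b^2"
    by fastforce
  then have "(of_int (qchar a) :: 'a) = a ^ k"
  proof cases
    case 1
    then show ?thesis
      using three_le_CARD[OF assms] q by simp
  next
    case 2
    then show ?thesis
      by (simp add: fermat flip: power_mult)
  next
    case 3
    then have "a \<notin> (\<lambda>b. b^2) ` (-{0})"
      by auto
    then have "a ^ k \<noteq> 1"
      using nonzero_squares_eq_roots[OF assms] q by auto
    moreover have "(a ^ k)^2 = 1"
      using fermat[OF \<open>a \<noteq> 0\<close>] by (simp add: power_mult mult.commute)
    ultimately have "a ^ k = -1"
      using power2_eq_1_iff by blast
    then show ?thesis
      using 3 by (simp add: qchar_def)
  qed
  then show ?thesis
    using q by simp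
qed

lemma qchar_mult:
  assumes "odd CARD('a::{finite,field})"
  shows "qchar ((a::'a) * b) = qchar a * qchar b"
proof -
  have "qchar a * qchar b \<in> {-1, 0, 1}"
    using qchar_values[of a] qchar_values[of b] by auto
  moreover have "(of_int (qchar (a * b)) :: 'a) = of_int (qchar a * qchar b)"
    by (simp add: euler_criterion[OF assms] power_mult_distrib)
  ultimately show ?thesis
    using of_int_eq_iff_sign_values[OF two_neq_zero[OF assms] qchar_values] by blast
qed

lemma qchar_inverse:
  assumes "odd CARD('a::{finite,field})"
  shows "qchar (inverse (a::'a)) = qchar a"
proof (cases "a = 0")
  case False
  then have "qchar a * qchar (inverse a) = 1"
    by (simp flip: qchar_mult[OF assms])
  then show ?thesis
    using qchar_values[of a] by auto
qed simp

lemma qchar_minus_one: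
  assumes "odd CARD('a::{finite,field})"
  shows "qchar (-1::'a) = (-1) ^ ((CARD('a) - 1) div 2)"
proof -
  have "(-1::int) ^ ((CARD('a) - 1) div 2) \<in> {-1, 0, 1}"
    by (cases "even ((CARD('a) - 1) div 2)") auto
  moreover have "(of_int (qchar (-1::'a)) :: 'a) = of_int ((-1) ^ ((CARD('a) - 1) div 2))"
    by (simp add: euler_criterion[OF assms])
  ultimately show ?thesis
    using of_int_eq_iff_sign_values[OF two_neq_zero[OF assms] qchar_values] by blast
qed

lemma odd_half_pred_iff: "odd (n::nat) \<Longrightarrow> odd ((n - 1) div 2) \<longleftrightarrow> n mod 4 = 3"
  by presburger

lemma qchar_minus_one_power_half:
  assumes "odd CARD('a::{finite,field})" and "odd d"
  shows "real_of_int (qchar (-1::'a)) ^ ((d - 1) div 2) =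
           (if d mod 4 = 3 \<and> CARD('a) mod 4 = 3 then -1 else 1)"
proof -
  have "real_of_int (qchar (-1::'a)) ^ ((d - 1) div 2) =
        (-1) ^ ((CARD('a) - 1) div 2 * ((d - 1) div 2))"
    by (simp add: qchar_minus_one[OF assms(1)] power_mult)
  then show ?thesis
    using odd_half_pred_iff[OF assms(1)] odd_half_pred_iff[OF assms(2)] by auto
qed

lemma sum_qchar:
  assumes "odd CARD('a::{finite,field})"
  shows "(\<Sum>a\<in>UNIV. qchar (a::'a)) = 0"
proof -
  have "card ((\<lambda>b. b^2) ` (-{0::'a})) < card (-{0::'a})"
    using card_nonzero_squares[OF assms] three_le_CARD[OF assms]
    by (simp add: Compl_eq_Diff_UNIV card_Diff_singleton)
  then have "\<not> -{0::'a} \<subseteq> (\<lambda>b. b^2) ` (-{0})"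
    using card_mono[of "(\<lambda>b. b^2) ` (-{0::'a})" "-{0}"] by auto
  then obtain n :: 'a where "n \<noteq> 0" "n \<notin> (\<lambda>b. b^2) ` (-{0})"
    by blast
  then have n: "qchar n = -1" "n \<noteq> 0"
    by (auto simp: qchar_def)
  have "(\<Sum>a\<in>UNIV. qchar (a::'a)) = (\<Sum>a\<in>UNIV. qchar (n * a))"
    by (rule sum.reindex_bij_witness[where i="\<lambda>a. n * a" and j="\<lambda>b. b / n"]) (use n in auto)
  also have "\<dots> = - (\<Sum>a\<in>UNIV. qchar (a::'a))"
    by (simp add: qchar_mult[OF assms] n sum_negf)
  finally show ?thesis
    by simp
qed

lemma card_square_roots:
  assumes "odd CARD('a::{finite,field})"
  shows "int (card {t::'a. t^2 = a}) = 1 + qchar a"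
proof -
  consider "a = 0" | b where "a = b^2" "b \<noteq> 0" | "a \<noteq> 0" "\<nexists>b. a = b^2"
    by fastforce
  then show ?thesis
  proof cases
    case 1
    then have "{t::'a. t^2 = a} = {0}"
      by auto
    then show ?thesis
      using 1 by simp
  next
    case 2
    have "b + b \<noteq> 0"
      using 2 two_neq_zero[OF assms] by (metis mult_2 mult_eq_0_iff)
    then have "b \<noteq> - b"
      by (metis eq_neg_iff_add_eq_0)
    moreover have "{t. t^2 = a} = {b, -b}"
      using 2 by (auto simp: power2_eq_iff)
    ultimately show ?thesis
      using 2 by simp
  next
    case 3
    then have "{t::'a. t^2 = a} = {}" "qchar a = -1"
      by (auto simp: qchar_def)
    then show ?thesis
      by simp
  qed
qed

section \<open>Gauss sums\<close>

definition gauss_sum :: "'a::{finite,field} itself \<Rightarrow> complex" where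
  "gauss_sum _ = (\<Sum>a\<in>UNIV. of_int (qchar a) * addchar (a::'a))"

lemma sum_qchar_addchar_mult:
  assumes "odd CARD('a::{finite,field})"
  shows "(\<Sum>s\<in>UNIV. of_int (qchar s) * addchar ((a::'a) * s)) = of_int (qchar a) * gauss_sum TYPE('a)"
proof (cases "a = 0")
  case True
  then show ?thesis
    by (simp flip: of_int_sum add: sum_qchar[OF assms])
next
  case False
  have "(\<Sum>s\<in>UNIV. of_int (qchar s) * addchar (a * s)) = (\<Sum>b\<in>UNIV. of_int (qchar (b / a)) * addchar b)"
    by (rule sum.reindex_bij_witness[where i="\<lambda>b. b / a" and j="\<lambda>s. a * s"]) (use False in auto)
  also have "\<dots> = of_int (qchar a) * gauss_sum TYPE('a)"
    by (simp add: gauss_sum_def divide_inverse qchar_mult[OF assms] qchar_inverse[OF assms]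
        sum_distrib_left mult_ac)
  finally show ?thesis .
qed

lemma sum_over_squares:
  fixes f :: "'a::{finite,field} \<Rightarrow> complex"
  assumes "odd CARD('a)"
  shows "(\<Sum>t\<in>UNIV. f (t^2)) = (\<Sum>a\<in>UNIV. (1 + of_int (qchar a)) * f a)"
proof -
  have "(\<Sum>t\<in>UNIV. f (t^2)) = (\<Sum>t\<in>UNIV. \<Sum>a\<in>UNIV. if t^2 = a then f a else 0)"
    by simp
  also have "\<dots> = (\<Sum>a\<in>UNIV. of_nat (card {t::'a. t^2 = a}) * f a)"
    by (subst sum.swap) (simp add: sum.If_cases)
  also have "\<dots> = (\<Sum>a\<in>UNIV. (1 + of_int (qchar a)) * f a)"
  proof (intro sum.cong refl)
    fix a :: 'a
    have "(of_nat (card {t::'a. t^2 = a}) :: complex) = of_int (int (card {t::'a. t^2 = a}))"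
      by simp
    then show "of_nat (card {t::'a. t^2 = a}) * f a = (1 + of_int (qchar a)) * f a"
      by (simp add: card_square_roots[OF assms])
  qed
  finally show ?thesis .
qed

lemma sum_addchar_mult_square:
  assumes "odd CARD('a::{finite,field})" and "(s::'a) \<noteq> 0"
  shows "(\<Sum>t\<in>UNIV. addchar (s * t^2)) = of_int (qchar s) * gauss_sum TYPE('a)"
proof -
  have "(\<Sum>t\<in>UNIV. addchar (s * t^2)) = (\<Sum>a\<in>UNIV. (1 + of_int (qchar a)) * addchar (s * a))"
    by (rule sum_over_squares[OF assms(1)])
  also have "\<dots> = (\<Sum>a\<in>UNIV. addchar (s * a)) + (\<Sum>a\<in>UNIV. of_int (qchar a) * addchar (s * a))"
    by (simp add: distrib_right sum.distrib)
  also have "\<dots> = of_int (qchar s) * gauss_sum TYPE('a)"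
    using assms(2) by (simp add: sum_addchar_mult sum_qchar_addchar_mult[OF assms(1)])
  finally show ?thesis .
qed

lemma sum_addchar_quadratic:
  assumes "odd CARD('a::{finite,field})" and "(s::'a) \<noteq> 0"
  shows "(\<Sum>t\<in>UNIV. addchar (s * t^2 - b * t)) =
           addchar (- (b^2) / (4 * s)) * (of_int (qchar s) * gauss_sum TYPE('a))"
proof -
  define c where "c = b / (2 * s)"
  have "(2::'a) \<noteq> 0" "(4::'a) \<noteq> 0"
    using two_neq_zero[OF assms(1)] four_neq_zero[OF assms(1)] .
  then have bc: "b = 2 * s * c"
    using assms(2) by (simp add: c_def)
  have "b^2 / (4 * s) = s * c^2"
    using \<open>(4::'a) \<noteq> 0\<close> assms(2) by (simp add: bc power2_eq_square field_simps)
  then have complete_square: "s * (u + c)^2 - b * (u + c) = - (b^2) / (4 * s) + s * u^2" for u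
    by (simp add: bc power2_eq_square algebra_simps)
  have "(\<Sum>t\<in>UNIV. addchar (s * t^2 - b * t)) = (\<Sum>u\<in>UNIV. addchar (s * (u + c)^2 - b * (u + c)))"
    by (rule sum.reindex_bij_witness[where i="\<lambda>u. u + c" and j="\<lambda>t. t - c"]) auto
  also have "\<dots> = (\<Sum>u\<in>UNIV. addchar (- (b^2) / (4 * s)) * addchar (s * u^2))"
    by (simp only: complete_square addchar_add)
  also have "\<dots> = addchar (- (b^2) / (4 * s)) * (\<Sum>t\<in>UNIV. addchar (s * t^2))"
    by (simp only: sum_distrib_left)
  finally show ?thesis
    by (simp add: sum_addchar_mult_square[OF assms])
qed

lemma gauss_sum_mult_cnj:
  assumes "odd CARD('a::{finite,field})"
  shows "gauss_sum TYPE('a) * cnj (gauss_sum TYPE('a)) = of_nat CARD('a)"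
proof -
  let ?G = "gauss_sum TYPE('a)"
  have "?G * cnj ?G = (\<Sum>b\<in>UNIV. cnj (addchar b) * (of_int (qchar (b::'a)) * ?G))"
    by (simp add: gauss_sum_def sum_distrib_left sum_distrib_right mult_ac)
  also have "\<dots> = (\<Sum>b\<in>UNIV. cnj (addchar b) * (\<Sum>s\<in>UNIV. of_int (qchar s) * addchar ((b::'a) * s)))"
    by (simp only: sum_qchar_addchar_mult[OF assms])
  also have "\<dots> = (\<Sum>b\<in>UNIV. \<Sum>s\<in>UNIV. of_int (qchar s) * (addchar (b * s) * cnj (addchar (b::'a))))"
    by (simp add: sum_distrib_left mult_ac)
  also have "\<dots> = (\<Sum>b\<in>UNIV. \<Sum>s\<in>UNIV. of_int (qchar s) * addchar ((s - 1) * (b::'a)))"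
    by (simp add: addchar_diff algebra_simps)
  also have "\<dots> = (\<Sum>s\<in>UNIV. of_int (qchar s) * (\<Sum>b\<in>UNIV. addchar ((s - 1) * (b::'a))))"
    by (simp only: sum_distrib_left) (rule sum.swap)
  also have "\<dots> = (\<Sum>s\<in>UNIV. if s = (1::'a) then of_nat CARD('a) else 0)"
    by (intro sum.cong refl) (simp add: sum_addchar_mult)
  also have "\<dots> = of_nat CARD('a)"
    by simp
  finally show ?thesis .
qed

lemma gauss_sum_nonzero:
  assumes "odd CARD('a::{finite,field})"
  shows "gauss_sum TYPE('a) \<noteq> 0"
  using gauss_sum_mult_cnj[OF assms] by auto

lemma cnj_gauss_sum:
  assumes "odd CARD('a::{finite,field})"
  shows "cnj (gauss_sum TYPE('a)) = of_int (qchar (-1::'a)) * gauss_sum TYPE('a)"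
proof -
  have "cnj (gauss_sum TYPE('a)) = (\<Sum>b\<in>UNIV. of_int (qchar b) * addchar ((-1) * (b::'a)))"
    by (simp add: gauss_sum_def addchar_uminus)
  also have "\<dots> = of_int (qchar (-1::'a)) * gauss_sum TYPE('a)"
    by (rule sum_qchar_addchar_mult[OF assms])
  finally show ?thesis .
qed

lemma gauss_sum_squared:
  assumes "odd CARD('a::{finite,field})"
  shows "gauss_sum TYPE('a) ^ 2 = of_int (qchar (-1::'a)) * of_nat CARD('a)"
proof -
  let ?e = "of_int (qchar (-1::'a)) :: complex" and ?G = "gauss_sum TYPE('a)"
  have "?e * ?e = of_int (qchar (-1::'a) ^ 2)"
    by (simp add: power2_eq_square)
  also have "\<dots> = 1"
    by (simp add: qchar_power2)
  finally have "?e * ?e = 1" .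
  have "?e * ?G ^ 2 = of_nat CARD('a)"
    using gauss_sum_mult_cnj[OF assms] by (simp add: cnj_gauss_sum[OF assms] power2_eq_square mult_ac)
  then have "?e * (?e * ?G ^ 2) = ?e * of_nat CARD('a)"
    by simp
  then show ?thesis
    using \<open>?e * ?e = 1\<close> by (simp flip: mult.assoc)
qed

section \<open>Fourier analysis on $\mathbb{F}_q^d$\<close>

lemma sum_vec_prod_eq_prod_sum:
  "(\<Sum>x\<in>UNIV. \<Prod>i\<in>UNIV. f i ((x::'a::finite^'n)$i)) = (\<Prod>i\<in>UNIV. \<Sum>a\<in>UNIV. (f i a :: 'b::comm_semiring_1))"
proof -
  have "(\<Prod>i\<in>UNIV. \<Sum>a\<in>UNIV. f i a) = (\<Sum>g\<in>PiE UNIV (\<lambda>_. UNIV). \<Prod>i\<in>UNIV. f i (g i))"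
    by (rule prod_sum_PiE) auto
  also have "\<dots> = (\<Sum>g\<in>UNIV. \<Prod>i\<in>UNIV. f i (g i))"
    by simp
  also have "\<dots> = (\<Sum>x\<in>UNIV. \<Prod>i\<in>UNIV. f i ((x::'a^'n)$i))"
    by (rule sum.reindex_bij_witness[where i="vec_nth" and j="vec_lambda"]) (auto simp: fun_eq_iff)
  finally show ?thesis ..
qed

lemma dotp_diff_right: "dotp m (x - y) = dotp m x - dotp m y"
  by (simp add: dotp_def algebra_simps sum_subtractf)

lemma sum_addchar_dotp:
  "(\<Sum>m\<in>UNIV. addchar (dotp m (x::'a::{finite,field}^'n))) =
     (if x = 0 then of_nat CARD('a) ^ CARD('n) else 0)"
proof -
  have "(\<Sum>m\<in>UNIV. addchar (dotp m (x::'a^'n))) = (\<Prod>i\<in>UNIV. \<Sum>a\<in>UNIV. addchar (a * x$i))"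
    unfolding dotp_def addchar_sum by (rule sum_vec_prod_eq_prod_sum)
  also have "\<dots> = (\<Prod>i\<in>UNIV. if x$i = 0 then of_nat CARD('a) else 0)"
    by (intro prod.cong refl) (subst mult.commute, rule sum_addchar_mult)
  also have "\<dots> = (if x = 0 then of_nat CARD('a) ^ CARD('n) else 0)"
    by (auto simp: vec_eq_iff prod_zero_iff)
  finally show ?thesis .
qed

lemma fourier_inversion:
  fixes f :: "'a::{finite,field}^'n \<Rightarrow> complex"
  shows "(\<Sum>m\<in>UNIV. (\<Sum>w\<in>UNIV. f w * addchar (- dotp m w)) * addchar (dotp m z)) =
           of_nat CARD('a) ^ CARD('n) * f z"
proof -
  have "(\<Sum>m\<in>UNIV. (\<Sum>w\<in>UNIV. f w * addchar (- dotp m w)) * addchar (dotp m z)) =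
        (\<Sum>m\<in>UNIV. \<Sum>w\<in>UNIV. f w * addchar (dotp m (z - w)))"
    by (simp add: sum_distrib_left sum_distrib_right addchar_uminus addchar_diff dotp_diff_right mult_ac)
  also have "\<dots> = (\<Sum>w\<in>UNIV. f w * (\<Sum>m\<in>UNIV. addchar (dotp m (z - w))))"
    by (subst sum.swap) (simp add: sum_distrib_left)
  also have "\<dots> = (\<Sum>w\<in>UNIV. if w = z then of_nat CARD('a) ^ CARD('n) * f w else 0)"
    by (intro sum.cong refl) (simp add: sum_addchar_dotp)
  also have "\<dots> = of_nat CARD('a) ^ CARD('n) * f z"
    by simp
  finally show ?thesis .
qed

lemma sum_pairs_addchar_dotp:
  fixes A :: "('a::{finite,field}^'n) set"
  shows "(\<Sum>x\<in>A. \<Sum>y\<in>A. addchar (dotp m (x - y))) =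
           (of_nat CARD('a) ^ CARD('n))^2 * of_real ((cmod (fourier A m))^2)"
proof -
  let ?S = "\<Sum>x\<in>A. addchar (dotp m x)" and ?Q = "of_nat CARD('a) ^ CARD('n) :: complex"
  have "fourier A m = cnj ?S / ?Q"
    by (simp add: fourier_def addchar_uminus)
  then have "of_real ((cmod (fourier A m))^2) = ?S * cnj ?S / ?Q^2"
    by (simp only: complex_norm_square) (simp add: power2_eq_square mult.commute)
  moreover have "(\<Sum>x\<in>A. \<Sum>y\<in>A. addchar (dotp m (x - y))) = ?S * cnj ?S"
    by (simp add: dotp_diff_right addchar_diff sum_product)
  ultimately show ?thesis
    by simp
qed

lemma parseval:
  fixes A :: "('a::{finite,field}^'n) set"
  shows "(\<Sum>m\<in>UNIV. (cmod (fourier A m))^2) = real (card A) / real CARD('a) ^ CARD('n)"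
proof -
  let ?Q = "of_nat CARD('a) ^ CARD('n) :: complex"
  have "?Q^2 * of_real (\<Sum>m\<in>UNIV. (cmod (fourier A m))^2) =
        (\<Sum>m\<in>UNIV. \<Sum>x\<in>A. \<Sum>y\<in>A. addchar (dotp m (x - y)))"
    by (simp only: sum_pairs_addchar_dotp of_real_sum sum_distrib_left)
  also have "\<dots> = (\<Sum>x\<in>A. \<Sum>m\<in>UNIV. \<Sum>y\<in>A. addchar (dotp m (x - y)))"
    by (rule sum.swap)
  also have "\<dots> = (\<Sum>x\<in>A. \<Sum>y\<in>A. \<Sum>m\<in>UNIV. addchar (dotp m (x - y)))"
    by (intro sum.cong refl sum.swap)
  also have "\<dots> = (\<Sum>x\<in>A. ?Q)"
    by (intro sum.cong refl) (simp add: sum_addchar_dotp sum.delta')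
  finally have "?Q^2 * of_real (\<Sum>m\<in>UNIV. (cmod (fourier A m))^2) = ?Q * of_nat (card A)"
    by (simp add: mult.commute)
  then have "of_real (\<Sum>m\<in>UNIV. (cmod (fourier A m))^2) =
             (of_real (real (card A) / real CARD('a) ^ CARD('n)) :: complex)"
    by (simp add: power2_eq_square field_simps)
  then show ?thesis
    by (simp only: of_real_eq_iff)
qed
lemma sum_addchar_quadratic_vec:
  assumes "odd CARD('a::{finite,field})" and "(s::'a) \<noteq> 0"
  shows "(\<Sum>w\<in>UNIV. addchar (s * sqnorm w - dotp m (w::'a^'n))) =
           addchar (- sqnorm m / (4 * s)) * (of_int (qchar s) * gauss_sum TYPE('a)) ^ CARD('n)"
proof -
  have coordinatewise: "s * sqnorm w - dotp m w = (\<Sum>i\<in>UNIV. s * (w$i)^2 - m$i * w$i)" for w :: "'a^'n"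
    by (simp add: sqnorm_def dotp_def sum_distrib_left sum_subtractf)
  have "(\<Sum>w\<in>UNIV. addchar (s * sqnorm w - dotp m (w::'a^'n))) =
        (\<Prod>i\<in>UNIV. \<Sum>t\<in>UNIV. addchar (s * t^2 - m$i * t))"
    unfolding coordinatewise addchar_sum by (rule sum_vec_prod_eq_prod_sum)
  also have "\<dots> = (\<Prod>i\<in>UNIV. addchar (- ((m$i)^2) / (4 * s)) * (of_int (qchar s) * gauss_sum TYPE('a)))"
    by (simp only: sum_addchar_quadratic[OF assms])
  also have "\<dots> = addchar (- sqnorm m / (4 * s)) * (of_int (qchar s) * gauss_sum TYPE('a)) ^ CARD('n)"
    by (simp add: prod.distrib sqnorm_def sum_negf sum_divide_distrib flip: addchar_sum)
  finally show ?thesis .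
qed

lemma addchar_sqnorm_expansion:
  assumes "odd CARD('a::{finite,field})" and "(s::'a) \<noteq> 0"
  shows "of_nat CARD('a) ^ CARD('n) * addchar (s * sqnorm (z::'a^'n)) =
           (of_int (qchar s) * gauss_sum TYPE('a)) ^ CARD('n) *
           (\<Sum>m\<in>UNIV. addchar (- sqnorm m / (4 * s)) * addchar (dotp m z))"
proof -
  have "(\<Sum>w\<in>UNIV. addchar (s * sqnorm w) * addchar (- dotp m w)) =
        addchar (- sqnorm m / (4 * s)) * (of_int (qchar s) * gauss_sum TYPE('a)) ^ CARD('n)"
    for m :: "'a^'n"
    by (simp only: sum_addchar_quadratic_vec[OF assms, symmetric] diff_conv_add_uminus addchar_add)
  then show ?thesis
    using fourier_inversion[of "\<lambda>w. addchar (s * sqnorm w)" z]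
    by (simp add: sum_distrib_left mult_ac)
qed

lemma sum_pairs_addchar_sqnorm:
  fixes A :: "('a::{finite,field}^'n) set"
  assumes "odd CARD('a)" and "(s::'a) \<noteq> 0"
  shows "(\<Sum>x\<in>A. \<Sum>y\<in>A. addchar (s * sqnorm (x - y))) =
           (of_int (qchar s) * gauss_sum TYPE('a)) ^ CARD('n) * of_nat CARD('a) ^ CARD('n) *
           (\<Sum>m\<in>UNIV. addchar (- sqnorm m / (4 * s)) * of_real ((cmod (fourier A m))^2))"
proof -
  let ?Q = "of_nat CARD('a) ^ CARD('n) :: complex"
    and ?K = "(of_int (qchar s) * gauss_sum TYPE('a)) ^ CARD('n)"
  have "?Q * (\<Sum>x\<in>A. \<Sum>y\<in>A. addchar (s * sqnorm (x - y))) =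
        ?K * (\<Sum>m\<in>UNIV. addchar (- sqnorm m / (4 * s)) * (\<Sum>x\<in>A. \<Sum>y\<in>A. addchar (dotp m (x - y))))"
    by (simp add: sum_distrib_left addchar_sqnorm_expansion[OF assms] sum.swap[of _ UNIV])
  also have "\<dots> = ?Q * (?K * ?Q *
      (\<Sum>m\<in>UNIV. addchar (- sqnorm m / (4 * s)) * of_real ((cmod (fourier A m))^2)))"
    by (simp add: sum_pairs_addchar_dotp sum_distrib_left power2_eq_square mult_ac)
  finally show ?thesis
    by simp
qed

text \<open>Because \<open>c / 0 = 0\<close>, the sum on the left is the full sum of \<open>\<chi>(c / s)\<close> minus the
  term \<open>\<chi>(0) = 1\<close> for \<open>s = 0\<close>, where \<open>\<eta>(0) = 0\<close>.\<close>

lemma sum_qchar_power_addchar_divide: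
  assumes "odd CARD('a::{finite,field})" and "odd d"
  shows "(\<Sum>s\<in>UNIV. of_int (qchar s) ^ (d + 1) * addchar (c / (s::'a))) =
           (if c = 0 then of_nat CARD('a) else 0) - 1"
proof -
  obtain k where k: "d + 1 = 2 * k" "k > 0"
    using assms(2) by (metis dvd_def even_Suc odd_pos Suc_eq_plus1 nat_0_less_mult_iff zero_less_Suc)
  have "of_int (qchar s) ^ (d + 1) * addchar (c / s) = addchar (c * inverse s) - (if s = 0 then 1 else 0)"
    for s :: 'a
    using k by (simp add: power_mult qchar_power2 divide_inverse flip: of_int_power)
  then have "(\<Sum>s\<in>UNIV. of_int (qchar s) ^ (d + 1) * addchar (c / (s::'a))) =
             (\<Sum>s\<in>UNIV. addchar (c * inverse (s::'a))) - 1"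
    by (simp add: sum_subtractf)
  also have "(\<Sum>s\<in>UNIV. addchar (c * inverse (s::'a))) = (\<Sum>u\<in>UNIV. addchar (c * u))"
    by (rule sum.reindex_bij_witness[where i=inverse and j=inverse]) auto
  finally show ?thesis
    by (simp add: sum_addchar_mult)
qed

section \<open>The quadratic-character sum over pairs\<close>

lemma sum_pairs_qchar_sqnorm:
  fixes A :: "('a::{finite,field}^'n) set"
  assumes "odd CARD('a)" and "odd CARD('n)"
  shows "(\<Sum>x\<in>A. \<Sum>y\<in>A. of_int (qchar (sqnorm (x - y)))) =
           gauss_sum TYPE('a) ^ (CARD('n) - 1) *
           (of_nat CARD('a) ^ (CARD('n) + 1) * of_real (Omega0 A) - of_nat (card A))"
proof -
  let ?G = "gauss_sum TYPE('a)" and ?Q = "of_nat CARD('a) ^ CARD('n) :: complex"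
    and ?q = "of_nat CARD('a) :: complex" and ?d = "CARD('n)"
  let ?P = "\<lambda>m. of_real ((cmod (fourier A m))^2) :: complex"
  have "?G * (\<Sum>x\<in>A. \<Sum>y\<in>A. of_int (qchar (sqnorm (x - y)))) =
        (\<Sum>s\<in>UNIV. of_int (qchar s) * (\<Sum>x\<in>A. \<Sum>y\<in>A. addchar (sqnorm (x - y) * s)))"
    by (simp add: sum_distrib_left mult.commute[of ?G] sum_qchar_addchar_mult[OF assms(1), symmetric]
        sum.swap[of _ UNIV])
  also have "\<dots> = (\<Sum>s\<in>UNIV. ?G ^ ?d * ?Q *
      (\<Sum>m\<in>UNIV. ?P m * (of_int (qchar s) ^ (?d + 1) * addchar ((- sqnorm m / 4) / s))))"
  proof (intro sum.cong refl)
    fix s :: 'a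
    show "of_int (qchar s) * (\<Sum>x\<in>A. \<Sum>y\<in>A. addchar (sqnorm (x - y) * s)) =
          ?G ^ ?d * ?Q * (\<Sum>m\<in>UNIV. ?P m * (of_int (qchar s) ^ (?d + 1) * addchar ((- sqnorm m / 4) / s)))"
      by (cases "s = 0")
         (simp_all add: sum_pairs_addchar_sqnorm[OF assms(1)] sum_distrib_left power_mult_distrib mult_ac)
  qed
  also have "\<dots> = ?G ^ ?d * ?Q *
      (\<Sum>m\<in>UNIV. ?P m * (\<Sum>s\<in>UNIV. of_int (qchar s) ^ (?d + 1) * addchar ((- sqnorm m / 4) / s)))"
    by (simp only: sum_distrib_left) (rule sum.swap)
  also have "\<dots> = ?G ^ ?d * ?Q * (\<Sum>m\<in>UNIV. ?P m * ((if sqnorm m = 0 then ?q else 0) - 1))"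
  proof -
    have "(\<Sum>s\<in>UNIV. of_int (qchar s) ^ (?d + 1) * addchar ((- sqnorm m / 4) / s)) =
          (if sqnorm m = 0 then ?q else 0) - 1" for m :: "'a^'n"
      using sum_qchar_power_addchar_divide[OF assms, of "- sqnorm m / 4"] four_neq_zero[OF assms(1)]
      by simp
    then show ?thesis
      by (simp only:)
  qed
  also have "(\<Sum>m\<in>UNIV. ?P m * ((if sqnorm m = 0 then ?q else 0) - 1)) =
             ?q * of_real (Omega0 A) - of_nat (card A) / ?Q"
  proof -
    have "of_real (Omega0 A) = (\<Sum>m\<in>UNIV. if sqnorm m = 0 then ?P m else 0)"
      by (simp add: Omega0_def sum.If_cases)
    moreover have "(\<Sum>m\<in>UNIV. ?P m) = of_nat (card A) / ?Q"
      using parseval[of A] by (metis of_real_divide of_real_of_nat_eq of_real_power of_real_sum)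
    moreover have "?P m * ((if sqnorm m = 0 then ?q else 0) - 1) =
                   ?q * (if sqnorm m = 0 then ?P m else 0) - ?P m" for m
      by (cases "sqnorm m = 0") (simp_all add: algebra_simps)
    ultimately show ?thesis
      by (simp only: sum_subtractf sum_distrib_left)
  qed
  also have "?G ^ ?d * ?Q * (?q * of_real (Omega0 A) - of_nat (card A) / ?Q) =
             ?G ^ ?d * (?q * ?Q * of_real (Omega0 A) - of_nat (card A))"
    by (simp add: right_diff_distrib mult_ac)
  also have "?G ^ ?d = ?G * ?G ^ (?d - 1)"
    by (simp flip: power_Suc)
  finally show ?thesis
    using gauss_sum_nonzero[OF assms(1)] by (simp add: mult.assoc)
qed

lemma sum_pairs_qchar_sqnorm_real:
  fixes A :: "('a::{finite,field}^'n) set"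
  assumes "odd CARD('a)" and "odd CARD('n)"
  defines "k \<equiv> (CARD('n) - 1) div 2"
  shows "(\<Sum>x\<in>A. \<Sum>y\<in>A. real_of_int (qchar (sqnorm (x - y)))) =
           real_of_int (qchar (-1::'a)) ^ k *
           (real CARD('a) ^ ((3 * CARD('n) + 1) div 2) * Omega0 A - real CARD('a) ^ k * real (card A))"
proof -
  let ?q = "real CARD('a)"
  have "CARD('n) - 1 = 2 * k"
    using assms(2) unfolding k_def by simp
  then have "gauss_sum TYPE('a) ^ (CARD('n) - 1) = (of_int (qchar (-1::'a)) * of_nat CARD('a)) ^ k"
    by (metis gauss_sum_squared[OF assms(1)] power_mult)
  have exponents: "?q ^ k * (?q ^ (CARD('n) + 1) * x) = ?q ^ ((3 * CARD('n) + 1) div 2) * x" for x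
    unfolding mult.assoc[symmetric] power_add[symmetric] k_def using assms(2)
    by (intro arg_cong[where f="\<lambda>e. ?q ^ e * x"]) presburger
  have "(\<Sum>x\<in>A. \<Sum>y\<in>A. real_of_int (qchar (sqnorm (x - y)))) =
        (real_of_int (qchar (-1::'a)) * ?q) ^ k * (?q ^ (CARD('n) + 1) * Omega0 A - real (card A))"
    using sum_pairs_qchar_sqnorm[OF assms(1,2), of A] \<open>gauss_sum TYPE('a) ^ (CARD('n) - 1) = _\<close>
    by (simp flip: of_real_eq_iff[where 'a=complex])
  also have "\<dots> = real_of_int (qchar (-1::'a)) ^ k *
      (?q ^ ((3 * CARD('n) + 1) div 2) * Omega0 A - ?q ^ k * real (card A))"
    by (simp only: power_mult_distrib right_diff_distrib mult.assoc exponents)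
  finally show ?thesis .
qed

lemma SQ_plus_half_ZR:
  fixes A :: "('a::{finite,field}^'n) set"
  shows "real (SQ A) + real (ZR A) / 2 =
           (real (card A)^2 + (\<Sum>x\<in>A. \<Sum>y\<in>A. real_of_int (qchar (sqnorm (x - y))))) / 2"
proof -
  let ?\<eta> = "\<lambda>p. qchar (sqnorm (fst p - snd p))"
  have count: "real (card {p \<in> A \<times> A. P p}) = (\<Sum>p\<in>A \<times> A. if P p then 1 else 0)" for P
    using sum.inter_filter[where A="A \<times> A" and P=P and g="\<lambda>_. 1::real"] by simp
  have "SQ A = card {p \<in> A \<times> A. ?\<eta> p = 1}" "ZR A = card {p \<in> A \<times> A. ?\<eta> p = 0}"
    unfolding SQ_def ZR_def by (auto intro!: arg_cong[where f=card])
  then have "2 * real (SQ A) + real (ZR A) =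
             (\<Sum>p\<in>A \<times> A. 2 * (if ?\<eta> p = 1 then 1 else 0) + (if ?\<eta> p = 0 then 1 else 0))"
    by (simp only: count sum.distrib sum_distrib_left)
  also have "\<dots> = (\<Sum>p\<in>A \<times> A. 1 + real_of_int (?\<eta> p))"
  proof (intro sum.cong refl)
    fix p :: "('a^'n) \<times> ('a^'n)"
    show "2 * (if ?\<eta> p = 1 then 1 else 0) + (if ?\<eta> p = 0 then 1 else 0) = 1 + real_of_int (?\<eta> p)"
      using qchar_values[of "sqnorm (fst p - snd p)"] by auto
  qed
  also have "\<dots> = real (card A)^2 + (\<Sum>x\<in>A. \<Sum>y\<in>A. real_of_int (qchar (sqnorm (x - y))))"
    by (simp add: sum.distrib card_cartesian_product power2_eq_square sum.cartesian_product case_prod_beta)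
  finally show ?thesis
    by simp
qed

theorem proposition3p2:
  fixes A :: "('a::{finite,field}^'n) set"
  assumes "odd CARD('a)" and "odd CARD('n)"
  shows "(CARD('n) mod 4 = 3 \<and> CARD('a) mod 4 = 3 \<longrightarrow>
            real (SQ A) + real (ZR A) / 2 =
              real (card A)^2 / 2
              - real CARD('a) ^ ((3 * CARD('n) + 1) div 2) / 2 * Omega0 A
              + real CARD('a) ^ ((CARD('n) - 1) div 2) * real (card A) / 2)
       \<and> (CARD('n) mod 4 = 1 \<or> (CARD('n) mod 4 = 3 \<and> CARD('a) mod 4 = 1) \<longrightarrow>
            real (SQ A) + real (ZR A) / 2 =
              real (card A)^2 / 2
              + real CARD('a) ^ ((3 * CARD('n) + 1) div 2) / 2 * Omega0 A
              - real CARD('a) ^ ((CARD('n) - 1) div 2) * real (card A) / 2)"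
proof -
  define e :: real where "e = (if CARD('n) mod 4 = 3 \<and> CARD('a) mod 4 = 3 then -1 else 1)"
  have count: "real (SQ A) + real (ZR A) / 2 =
        (real (card A)^2 + e * (real CARD('a) ^ ((3 * CARD('n) + 1) div 2) * Omega0 A
           - real CARD('a) ^ ((CARD('n) - 1) div 2) * real (card A))) / 2"
    unfolding e_def
    by (simp only: SQ_plus_half_ZR sum_pairs_qchar_sqnorm_real[OF assms]
        qchar_minus_one_power_half[OF assms])
  show ?thesis
  proof (intro conjI impI)
    assume "CARD('n) mod 4 = 3 \<and> CARD('a) mod 4 = 3"
    then have "e = -1"
      by (simp add: e_def)
    then show "real (SQ A) + real (ZR A) / 2 =
        real (card A)^2 / 2 - real CARD('a) ^ ((3 * CARD('n) + 1) div 2) / 2 * Omega0 A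
        + real CARD('a) ^ ((CARD('n) - 1) div 2) * real (card A) / 2"
      using count by (simp add: field_simps)
  next
    assume "CARD('n) mod 4 = 1 \<or> (CARD('n) mod 4 = 3 \<and> CARD('a) mod 4 = 1)"
    then have "e = 1"
      by (auto simp: e_def)
    then show "real (SQ A) + real (ZR A) / 2 =
        real (card A)^2 / 2 + real CARD('a) ^ ((3 * CARD('n) + 1) div 2) / 2 * Omega0 A
        - real CARD('a) ^ ((CARD('n) - 1) div 2) * real (card A) / 2"
      using count by (simp add: field_simps)
  qed
qed
end
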